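(* Let $m\neq n$ be positive integers and let $g,h$ be homeomorphisms of $\mathbb{R}$ satisfying $gh^mg^{-1}=h^n$. If $h$ has no fixed point, then $g$ has a fixed point. *)

theory Defs
  imports "HOL-Analysis.Analysis"
begin

end

theory Submission
  imports Defs
begin

(* A fixed-point-free homeomorphism h of the real line is increasing and moves every point
   to the same side, say x < h x (otherwise pass to its inverse); its forward orbits tend to
   +\<infinity> and its backward orbits to -\<infinity>. If m < n (otherwise pass to the inverse of g),
   iterating g h^m = h^n g gives g (h^(m k) x) = h^(m k) (h^((n - m) k) (g x)). Taking k large
   with the forward, respectively backward, orbit of g x moves the point h^(m k) x to the right,
   respectively to the left, under g; so g - id changes sign and has a zero. *)

lemma fixed_point_free_above_or_below:
  fixes f :: "real \<Rightarrow> real"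
  assumes cont: "continuous_on UNIV f" and no_fix: "\<forall>x. f x \<noteq> x"
  shows "(\<forall>x. x < f x) \<or> (\<forall>x. f x < x)"
proof (rule ccontr)
  assume "\<not> ?thesis"
  then obtain a b where "\<not> a < f a" "\<not> f b < b"
    by blast
  with no_fix have "f a - a < 0" "0 < f b - b"
    by (auto simp: not_less less_le)
  moreover have "connected (range (\<lambda>x. f x - x))"
    by (intro connected_continuous_image continuous_intros cont) auto
  then have "{f a - a .. f b - b} \<subseteq> range (\<lambda>x. f x - x)"
    by (rule connected_contains_Icc) auto
  ultimately have "0 \<in> range (\<lambda>x. f x - x)"
    by (meson atLeastAtMost_iff less_imp_le subsetD)
  with no_fix show False
    by auto
qed

lemma fixed_point_free_imp_strict_mono:
  fixes f :: "real \<Rightarrow> real"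
  assumes cont: "continuous_on UNIV f" and "inj f" and no_fix: "\<forall>x. f x \<noteq> x"
  shows "strict_mono f"
proof -
  have "strict_mono_on UNIV f \<or> strict_antimono_on UNIV f"
    using injective_eq_monotone_map[of UNIV f] cont \<open>inj f\<close> by simp
  moreover have "\<not> strict_antimono_on UNIV f"
  proof
    assume anti: "strict_antimono_on UNIV f"
    have "f (f 0) < f 0" if "0 < f 0"
      by (rule monotone_onD[OF anti]) (use that in auto)
    moreover have "f 0 < f (f 0)" if "f 0 < 0"
      by (rule monotone_onD[OF anti]) (use that in auto)
    ultimately show False
      using fixed_point_free_above_or_below[OF cont no_fix] by (meson less_asym)
  qed
  ultimately show ?thesis
    by simp
qed

lemma funpow_limit_is_fixed_point:
  fixes f :: "'a::t2_space \<Rightarrow> 'a"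
  assumes "continuous_on UNIV f" and "(\<lambda>k. (f ^^ k) a) \<longlonglongrightarrow> L"
  shows "f L = L"
proof -
  have "(\<lambda>k. f ((f ^^ k) a)) \<longlonglongrightarrow> f L"
    using assms continuous_on_eq_continuous_at isCont_tendsto_compose by blast
  moreover have "(\<lambda>k. f ((f ^^ k) a)) \<longlonglongrightarrow> L"
    using LIMSEQ_Suc[OF assms(2)] by simp
  ultimately show ?thesis
    by (rule LIMSEQ_unique)
qed

lemma funpow_tendsto_at_top:
  fixes f :: "real \<Rightarrow> real"
  assumes cont: "continuous_on UNIV f" and up: "\<forall>x. x < f x"
  shows "filterlim (\<lambda>k. (f ^^ k) a) at_top sequentially"
  unfolding filterlim_at_top_dense
proof
  fix b
  have inc: "incseq (\<lambda>k. (f ^^ k) a)"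
    by (rule incseq_SucI) (simp add: less_imp_le up)
  obtain N where N: "b < (f ^^ N) a"
  proof (rule ccontr)
    assume "\<not> thesis"
    then have "\<forall>k. (f ^^ k) a \<le> b"
      using that by (meson not_le)
    then obtain L where "(\<lambda>k. (f ^^ k) a) \<longlonglongrightarrow> L"
      using incseq_convergent[OF inc] by blast
    then show False
      using funpow_limit_is_fixed_point[OF cont] up by (metis less_irrefl)
  qed
  have "b < (f ^^ k) a" if "N \<le> k" for k
    using incseqD[OF inc that] N by linarith
  then show "\<forall>\<^sub>F k in sequentially. b < (f ^^ k) a"
    unfolding eventually_sequentially by blast
qed

lemma funpow_tendsto_at_bot:
  fixes f :: "real \<Rightarrow> real"
  assumes cont: "continuous_on UNIV f" and down: "\<forall>x. f x < x"
  shows "filterlim (\<lambda>k. (f ^^ k) a) at_bot sequentially"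
  unfolding filterlim_at_bot_dense
proof
  fix b
  have dec: "decseq (\<lambda>k. (f ^^ k) a)"
    by (rule decseq_SucI) (simp add: less_imp_le down)
  obtain N where N: "(f ^^ N) a < b"
  proof (rule ccontr)
    assume "\<not> thesis"
    then have "\<forall>k. b \<le> (f ^^ k) a"
      using that by (meson not_le)
    then obtain L where "(\<lambda>k. (f ^^ k) a) \<longlonglongrightarrow> L"
      using decseq_convergent[OF dec] by blast
    then show False
      using funpow_limit_is_fixed_point[OF cont] down by (metis less_irrefl)
  qed
  have "(f ^^ k) a < b" if "N \<le> k" for k
    using decseqD[OF dec that] N by linarith
  then show "\<forall>\<^sub>F k in sequentially. (f ^^ k) a < b"
    unfolding eventually_sequentially by blast
qed

lemma strict_mono_funpow:
  fixes f :: "'a::order \<Rightarrow> 'a"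
  assumes "strict_mono f"
  shows "strict_mono (f ^^ k)"
  by (induction k) (auto simp: strict_mono_def assms[unfolded strict_mono_def])

lemma funpow_inverse:
  fixes f f' :: "'a \<Rightarrow> 'a"
  assumes "f \<circ> f' = id"
  shows "f ^^ k \<circ> f' ^^ k = id"
proof (induction k)
  case (Suc k)
  have "f ^^ Suc k \<circ> f' ^^ Suc k = f ^^ k \<circ> (f \<circ> f') \<circ> f' ^^ k"
    by (metis funpow_Suc_right funpow.simps(2) comp_assoc)
  also have "\<dots> = f ^^ k \<circ> f' ^^ k"
    using assms by simp
  also have "\<dots> = id"
    by (rule Suc.IH)
  finally show ?case .
qed simp

lemma semiconj_funpow:
  assumes "g \<circ> a = b \<circ> g"
  shows "g \<circ> a ^^ k = b ^^ k \<circ> g"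
proof (induction k)
  case (Suc k)
  have "g \<circ> a ^^ Suc k = (g \<circ> a ^^ k) \<circ> a"
    by (simp only: funpow_Suc_right comp_assoc)
  also have "\<dots> = b ^^ k \<circ> (g \<circ> a)"
    using Suc.IH by (metis comp_assoc)
  also have "\<dots> = b ^^ Suc k \<circ> g"
    using assms by (simp only: funpow_Suc_right comp_assoc)
  finally show ?case .
qed simp

lemma semiconj_inverse_source:
  assumes "g \<circ> a = b \<circ> g" and "a \<circ> a' = id" and "b' \<circ> b = id"
  shows "g \<circ> a' = b' \<circ> g"
proof -
  have "g \<circ> a' = b' \<circ> b \<circ> g \<circ> a'"
    using assms(3) by simp
  also have "\<dots> = b' \<circ> g \<circ> (a \<circ> a')"
    using assms(1) by (metis comp_assoc)
  finally show ?thesis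
    using assms(2) by simp
qed

lemma semiconj_inverse_map:
  assumes "g \<circ> a = b \<circ> g" and "g \<circ> g' = id" and "g' \<circ> g = id"
  shows "g' \<circ> b = a \<circ> g'"
proof -
  have "g' \<circ> b = g' \<circ> b \<circ> g \<circ> g'"
    using assms(2) by (simp add: comp_assoc)
  also have "\<dots> = g' \<circ> g \<circ> a \<circ> g'"
    using assms(1) by (simp add: comp_assoc)
  finally show ?thesis
    using assms(3) by simp
qed

lemma semiconj_funpow_shift:
  assumes "g \<circ> h ^^ m = h ^^ n \<circ> g" and "m \<le> n"
  shows "g ((h ^^ (m * k)) a) = (h ^^ (m * k)) ((h ^^ ((n - m) * k)) (g a))"
proof -
  have "g \<circ> (h ^^ m) ^^ k = (h ^^ n) ^^ k \<circ> g"
    using assms(1) by (rule semiconj_funpow)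
  then have "g ((h ^^ (m * k)) a) = (h ^^ (n * k)) (g a)"
    by (metis comp_apply funpow_mult)
  moreover have "n * k = m * k + (n - m) * k"
    using assms(2) by (simp add: diff_mult_distrib)
  ultimately show ?thesis
    by (simp add: funpow_add)
qed

lemma semiconj_moves_point_up:
  fixes g h :: "real \<Rightarrow> real"
  assumes cont: "continuous_on UNIV h" and mono: "strict_mono h" and up: "\<forall>x. x < h x"
    and semiconj: "g \<circ> h ^^ m = h ^^ n \<circ> g" and "m < n"
  shows "\<exists>y. y < g y"
proof -
  have "strict_mono (\<lambda>k. (n - m) * k)"
    using \<open>m < n\<close> by (simp add: strict_mono_def)
  then have "filterlim (\<lambda>k. (h ^^ ((n - m) * k)) (g 0)) at_top sequentially"
    by (rule filterlim_compose[OF funpow_tendsto_at_top[OF cont up] filterlim_subseq])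
  then have "\<forall>\<^sub>F k in sequentially. 0 < (h ^^ ((n - m) * k)) (g 0)"
    by (simp add: filterlim_at_top_dense)
  then obtain k where "0 < (h ^^ ((n - m) * k)) (g 0)"
    using eventually_happens'[OF sequentially_bot] by blast
  then have "(h ^^ (m * k)) 0 < (h ^^ (m * k)) ((h ^^ ((n - m) * k)) (g 0))"
    by (rule strict_monoD[OF strict_mono_funpow[OF mono]])
  also have "\<dots> = g ((h ^^ (m * k)) 0)"
    by (rule semiconj_funpow_shift[OF semiconj less_imp_le[OF \<open>m < n\<close>], symmetric])
  finally show ?thesis ..
qed

lemma semiconj_moves_point_down:
  fixes g h :: "real \<Rightarrow> real"
  assumes cont: "continuous_on UNIV h" and mono: "strict_mono h" and down: "\<forall>x. h x < x"
    and semiconj: "g \<circ> h ^^ m = h ^^ n \<circ> g" and "m < n"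
  shows "\<exists>y. g y < y"
proof -
  have "strict_mono (\<lambda>k. (n - m) * k)"
    using \<open>m < n\<close> by (simp add: strict_mono_def)
  then have "filterlim (\<lambda>k. (h ^^ ((n - m) * k)) (g 0)) at_bot sequentially"
    by (rule filterlim_compose[OF funpow_tendsto_at_bot[OF cont down] filterlim_subseq])
  then have "\<forall>\<^sub>F k in sequentially. (h ^^ ((n - m) * k)) (g 0) < 0"
    by (simp add: filterlim_at_bot_dense)
  then obtain k where "(h ^^ ((n - m) * k)) (g 0) < 0"
    using eventually_happens'[OF sequentially_bot] by blast
  then have "(h ^^ (m * k)) ((h ^^ ((n - m) * k)) (g 0)) < (h ^^ (m * k)) 0"
    by (rule strict_monoD[OF strict_mono_funpow[OF mono]])
  also have "(h ^^ (m * k)) ((h ^^ ((n - m) * k)) (g 0)) = g ((h ^^ (m * k)) 0)"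
    by (rule semiconj_funpow_shift[OF semiconj less_imp_le[OF \<open>m < n\<close>], symmetric])
  finally show ?thesis ..
qed

lemma semiconj_has_fixed_point:
  fixes g h h' :: "real \<Rightarrow> real"
  assumes g_cont: "continuous_on UNIV g"
    and h_cont: "continuous_on UNIV h" and h'_cont: "continuous_on UNIV h'"
    and h_h': "h \<circ> h' = id" and h'_h: "h' \<circ> h = id"
    and no_fix: "\<forall>x. h x \<noteq> x"
    and semiconj: "g \<circ> h ^^ m = h ^^ n \<circ> g" and "m < n"
  shows "\<exists>x. g x = x"
proof -
  have h'_apply: "h (h' x) = x" and h_apply: "h' (h x) = x" for x
    using h_h' h'_h by (metis comp_apply id_apply)+
  have no_fix': "\<forall>x. h' x \<noteq> x"
    using no_fix h'_apply by metis
  have "inj h" and "inj h'"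
    using h_apply h'_apply by (metis injI)+
  then have mono: "strict_mono h" and mono': "strict_mono h'"
    using fixed_point_free_imp_strict_mono h_cont h'_cont no_fix no_fix' by blast+
  have semiconj': "g \<circ> h' ^^ m = h' ^^ n \<circ> g"
    using semiconj funpow_inverse[OF h_h'] funpow_inverse[OF h'_h] by (rule semiconj_inverse_source)
  have "(\<exists>y. y < g y) \<and> (\<exists>z. g z < z)"
  proof (cases "\<forall>x. x < h x")
    case True
    then have "\<forall>x. h' x < x"
      using h'_apply by metis
    then show ?thesis
      using semiconj_moves_point_up[OF h_cont mono True semiconj \<open>m < n\<close>]
        semiconj_moves_point_down[OF h'_cont mono' _ semiconj' \<open>m < n\<close>] by blast
  next
    case False
    then have down: "\<forall>x. h x < x"
      using fixed_point_free_above_or_below[OF h_cont no_fix] by blast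
    then have "\<forall>x. x < h' x"
      using h'_apply by metis
    then show ?thesis
      using semiconj_moves_point_up[OF h'_cont mono' _ semiconj' \<open>m < n\<close>]
        semiconj_moves_point_down[OF h_cont mono down semiconj \<open>m < n\<close>] by blast
  qed
  then show ?thesis
    using fixed_point_free_above_or_below[OF g_cont] by (meson less_asym)
qed

theorem lemma5p6:
  fixes g g' h h' :: "real \<Rightarrow> real" and m n :: nat
  assumes "m > 0" and "n > 0" and "m \<noteq> n"
    and "homeomorphism UNIV UNIV g g'"
    and "homeomorphism UNIV UNIV h h'"
    and "g \<circ> (h ^^ m) \<circ> g' = h ^^ n"
    and "\<forall>x. h x \<noteq> x"
  shows "\<exists>x. g x = x"
proof -
  have g_cont: "continuous_on UNIV g" and g'_cont: "continuous_on UNIV g'"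
    and g_g': "g \<circ> g' = id" and g'_g: "g' \<circ> g = id"
    using assms(4) by (auto simp: homeomorphism_def fun_eq_iff)
  have h_cont: "continuous_on UNIV h" and h'_cont: "continuous_on UNIV h'"
    and h_h': "h \<circ> h' = id" and h'_h: "h' \<circ> h = id"
    using assms(5) by (auto simp: homeomorphism_def fun_eq_iff)
  have "g \<circ> h ^^ m = g \<circ> h ^^ m \<circ> g' \<circ> g"
    using g'_g by (simp add: comp_assoc)
  also have "\<dots> = h ^^ n \<circ> g"
    by (simp only: assms(6))
  finally have semiconj: "g \<circ> h ^^ m = h ^^ n \<circ> g" .
  show ?thesis
  proof (cases "m < n")
    case True
    then show ?thesis
      using semiconj_has_fixed_point[OF g_cont h_cont h'_cont h_h' h'_h assms(7) semiconj] by blast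
  next
    case False
    then have "n < m"
      using assms(3) by simp
    then obtain x where "g' x = x"
      using semiconj_has_fixed_point[OF g'_cont h_cont h'_cont h_h' h'_h assms(7)
          semiconj_inverse_map[OF semiconj g_g' g'_g]] by blast
    then have "g x = x"
      using g_g' by (metis comp_apply id_apply)
    then show ?thesis ..
  qed
qed

end
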